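(* Let $G$ be a planar graph with a fixed plane embedding and coloring $\sigma$ such that $(G,\sigma)$ is color-connected, and let $(G^*,\sigma)$ be the colored dual graph. Then $(G^*,\sigma)$ is color-connected, i.e. for every color $c$ the set of dual vertices $v^*$ with $c\in\sigma(v^* )$ induces a connected subgraph of $G^*$.
   Context: $\sigma:V\to 2^{[m]}$; $(G,\sigma)$ is color-connected if for each color $c$ the vertices of $G$ whose color set contains $c$ induce a connected subgraph. $G^*$ is the planar dual of the embedded $G$ (one vertex per face, one dual edge $e^*$ crossing each edge $e$). Colored dual: for an edge $e=uv$ of $G$, $\sigma(e)=\sigma(u)\cup\sigma(v)$ and $\sigma(e^* )=\sigma(e)$; for a dual vertex $v^*$, $\sigma(v^* )$ is the union of $\sigma(e^* )$ over all dual edges $e^*$ incident to $v^*$ (equivalently, the union of $\sigma(v)$ over the vertices $v$ on the boundary of the corresponding face). *)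

theory Defs
  imports "HOL-Analysis.Analysis"
begin

definition plane_graph ::
  "'v set \<Rightarrow> 'v set set \<Rightarrow> ('v \<Rightarrow> complex) \<Rightarrow> ('v set \<Rightarrow> real \<Rightarrow> complex) \<Rightarrow> bool" where
  "plane_graph V E pos arcs \<longleftrightarrow>
     finite V \<and>
     E \<subseteq> {{u, v} | u v. u \<in> V \<and> v \<in> V \<and> u \<noteq> v} \<and>
     inj_on pos V \<and>
     (\<forall>e\<in>E. arc (arcs e) \<and> {pathstart (arcs e), pathfinish (arcs e)} = pos ` e) \<and>
     (\<forall>e\<in>E. \<forall>v\<in>V. pos v \<in> path_image (arcs e) \<longrightarrow> v \<in> e) \<and>
     (\<forall>e\<in>E. \<forall>e'\<in>E. e \<noteq> e' \<longrightarrow>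
        path_image (arcs e) \<inter> path_image (arcs e') \<subseteq> pos ` (e \<inter> e'))"

definition drawing :: "'v set \<Rightarrow> 'v set set \<Rightarrow> ('v \<Rightarrow> complex) \<Rightarrow> ('v set \<Rightarrow> real \<Rightarrow> complex) \<Rightarrow> complex set" where
  "drawing V E pos arcs = pos ` V \<union> (\<Union>e\<in>E. path_image (arcs e))"

text \<open>Faces: the connected components of the complement of the drawing.
  These are the vertices of the dual graph.\<close>
definition faces :: "'v set \<Rightarrow> 'v set set \<Rightarrow> ('v \<Rightarrow> complex) \<Rightarrow> ('v set \<Rightarrow> real \<Rightarrow> complex) \<Rightarrow> complex set set" where
  "faces V E pos arcs = components (- drawing V E pos arcs)"

text \<open>Edge e lies on the boundary of face f, i.e. the dual edge e* is incident to the dual vertex f.\<close>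
definition edge_on_face :: "('v set \<Rightarrow> real \<Rightarrow> complex) \<Rightarrow> 'v set \<Rightarrow> complex set \<Rightarrow> bool" where
  "edge_on_face arcs e f \<longleftrightarrow> path_image (arcs e) \<subseteq> frontier f"

text \<open>Adjacency in the dual graph G*: two faces are joined by a dual edge e* iff e lies on
  the boundary of both (loops and multiplicities are irrelevant for connectivity).\<close>
definition dual_adj :: "'v set set \<Rightarrow> ('v set \<Rightarrow> real \<Rightarrow> complex) \<Rightarrow> complex set \<Rightarrow> complex set \<Rightarrow> bool" where
  "dual_adj E arcs f g \<longleftrightarrow> (\<exists>e\<in>E. edge_on_face arcs e f \<and> edge_on_face arcs e g)"

text \<open>Coloring of an edge: sigma(e) = sigma(u) \<union> sigma(v) for e = {u,v}; also the colour of e*.\<close>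
definition edge_color :: "('v \<Rightarrow> nat set) \<Rightarrow> 'v set \<Rightarrow> nat set" where
  "edge_color \<sigma> e = (\<Union>u\<in>e. \<sigma> u)"

definition dual_color :: "'v set set \<Rightarrow> ('v set \<Rightarrow> real \<Rightarrow> complex) \<Rightarrow> ('v \<Rightarrow> nat set) \<Rightarrow> complex set \<Rightarrow> nat set" where
  "dual_color E arcs \<sigma> f = (\<Union>e\<in>{e\<in>E. edge_on_face arcs e f}. edge_color \<sigma> e)"

definition induces_connected :: "('a \<Rightarrow> 'a \<Rightarrow> bool) \<Rightarrow> 'a set \<Rightarrow> bool" where
  "induces_connected adj S \<longleftrightarrow>
     (\<forall>x\<in>S. \<forall>y\<in>S. (x, y) \<in> {(a, b). a \<in> S \<and> b \<in> S \<and> adj a b}\<^sup>*)"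

definition color_connected :: "'v set \<Rightarrow> 'v set set \<Rightarrow> nat \<Rightarrow> ('v \<Rightarrow> nat set) \<Rightarrow> bool" where
  "color_connected V E m \<sigma> \<longleftrightarrow>
     (\<forall>c\<in>{1..m}. induces_connected (\<lambda>u v. {u, v} \<in> E) {v\<in>V. c \<in> \<sigma> v})"

definition dual_color_connected ::
  "'v set \<Rightarrow> 'v set set \<Rightarrow> ('v \<Rightarrow> complex) \<Rightarrow> ('v set \<Rightarrow> real \<Rightarrow> complex) \<Rightarrow> nat \<Rightarrow> ('v \<Rightarrow> nat set) \<Rightarrow> bool" where
  "dual_color_connected V E pos arcs m \<sigma> \<longleftrightarrow>
     (\<forall>c\<in>{1..m}. induces_connected (dual_adj E arcs)
        {f \<in> faces V E pos arcs. c \<in> dual_color E arcs \<sigma> f})"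

end

theory Submission
  imports Defs
begin

(* Faces of colour c are those bounded by an edge with an endpoint of colour c. Around a vertex u,
  the faces bounded by edges at u are linked through shared edges at u: a split of them into two
  classes with no common edge at u would cut a small punctured disc around u into two disjoint,
  nonempty, relatively open pieces, each made of the faces of one class and their edges at u.
  The topological input is that a face whose closure contains one interior point of an edge has
  the whole edge on its boundary, which follows from Janiszewski's theorem. A walk of colour c
  in G then lifts to G*: consecutive vertices share an edge, and any face on that edge lies
  around both of them. *)

lemma arc_image_mem_iff:
  assumes "arc \<gamma>" "x \<in> {0..1}" "S \<subseteq> {0..1}"
  shows "\<gamma> x \<in> \<gamma> ` S \<longleftrightarrow> x \<in> S"
  using assms inj_on_image_mem_iff[of \<gamma> "{0..1}"] by (auto simp: arc_def)

lemma interior_arc_image_empty: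
  fixes \<gamma> :: "real \<Rightarrow> 'a::euclidean_space"
  assumes "arc \<gamma>" "2 \<le> DIM('a)"
  shows "interior (path_image \<gamma>) = {}"
proof (rule ccontr)
  assume "interior (path_image \<gamma>) \<noteq> {}"
  then obtain p \<rho> where "\<rho> > 0" and ball: "ball p \<rho> \<subseteq> path_image \<gamma>"
    by (meson ex_in_conv mem_interior)
  obtain h where h: "homeomorphism {0..1} (path_image \<gamma>) \<gamma> h"
    using homeomorphism_arc[OF assms(1)] by blast
  have "aff_dim (ball p \<rho>) \<le> aff_dim (UNIV :: real set)"
  proof (rule invariance_of_dimension_convex_domain)
    show "continuous_on (ball p \<rho>) h"
      using h ball continuous_on_subset homeomorphism_cont2 by blast
    show "inj_on h (ball p \<rho>)"
      using h ball by (metis homeomorphism_apply2 inj_on_inverseI subsetD)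
  qed auto
  then show False using assms(2) \<open>\<rho> > 0\<close> by (simp add: aff_dim_open)
qed

lemma path_segment_subset_closure:
  assumes "path \<gamma>" "0 \<le> a" "a < b" "b \<le> 1"
  shows "\<gamma> ` {a..b} \<subseteq> closure (\<gamma> ` {a<..<b})"
proof -
  have "continuous_on (closure {a<..<b}) \<gamma>"
    using assms by (auto simp: path_def elim!: continuous_on_subset)
  from image_closure_subset[OF this closed_closure closure_subset]
  show ?thesis using assms(3) by simp
qed

lemma arc_approaches_endpoint:
  assumes "arc \<gamma>" "p \<in> {\<gamma> 0, \<gamma> 1}" "r > 0"
  shows "(ball p r - {p}) \<inter> \<gamma> ` {0<..<1} \<noteq> {}"
proof -
  have "p \<in> closure (\<gamma> ` {0<..<1})"
    using assms path_segment_subset_closure[of \<gamma> 0 1] by (auto simp: arc_imp_path)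
  then obtain s where s: "s \<in> {0<..<1}" "dist (\<gamma> s) p < r"
    using assms(3) closure_approachable by blast
  have "\<gamma> s \<noteq> p"
    using assms(1,2) s(1) arc_image_mem_iff[of \<gamma> s "{0, 1}"] by auto
  then show ?thesis using s by (auto simp: dist_commute)
qed

lemma component_connects_to_later_arc_points:
  fixes \<gamma> :: "real \<Rightarrow> 'a::real_normed_vector"
  assumes "path \<gamma>" "0 \<le> t" "t < s" "s \<le> 1" and "connected f" "\<gamma> t \<in> closure f"
    and "closed T" "\<gamma> t \<notin> T" "f \<inter> T = {}" "\<gamma> ` {t<..<s} \<inter> T = {}"
    and "a \<in> f" "x \<in> {t<..<s}"
  shows "connected_component (- T) a (\<gamma> x)"
proof -
  obtain \<rho> where "\<rho> > 0" and ball: "ball (\<gamma> t) \<rho> \<subseteq> - T"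
    using assms(7,8) open_contains_ball[of "- T"] by auto
  have "\<gamma> t \<in> closure (\<gamma> ` {t<..<s})"
    using assms(1-4) path_segment_subset_closure[of \<gamma> t s] by auto
  then have meets_arc: "ball (\<gamma> t) \<rho> \<inter> \<gamma> ` {t<..<s} \<noteq> {}"
    using \<open>\<rho> > 0\<close> by (metis centre_in_ball disjoint_iff open_ball open_Int_closure_eq_empty)
  have meets_f: "ball (\<gamma> t) \<rho> \<inter> f \<noteq> {}"
    using assms(6) \<open>\<rho> > 0\<close> by (metis centre_in_ball disjoint_iff open_ball open_Int_closure_eq_empty)
  have "connected (\<gamma> ` {t<..<s})"
    using assms(1-4) by (intro connected_continuous_image) (auto simp: path_def elim!: continuous_on_subset)
  then have "connected (f \<union> ball (\<gamma> t) \<rho> \<union> \<gamma> ` {t<..<s})"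
    using assms(5) meets_arc meets_f
    by (intro connected_Un) (auto intro: connected_Un simp: Int_Un_distrib2 Int_commute)
  moreover have "f \<union> ball (\<gamma> t) \<rho> \<union> \<gamma> ` {t<..<s} \<subseteq> - T"
    using assms(9,10) ball by blast
  ultimately show ?thesis
    using assms(11,12) unfolding connected_component_def by blast
qed

context
  fixes \<gamma> :: "real \<Rightarrow> complex" and R f :: "complex set"
  assumes arc: "arc \<gamma>" and closed_R: "closed R" and R_meets_arc: "R \<inter> path_image \<gamma> \<subseteq> {\<gamma> 0, \<gamma> 1}"
    and component: "f \<in> components (- (R \<union> path_image \<gamma>))"
begin

lemma arc_interior_notin_R: "0 < x \<Longrightarrow> x < 1 \<Longrightarrow> \<gamma> x \<notin> R"
  using R_meets_arc arc_image_mem_iff[OF arc, of x "{0, 1}"] by (auto simp: path_image_def)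

lemma component_joins_open_arc_piece:
  assumes "0 < t" "t < s" "s < 1" "\<gamma> t \<in> closure f" "a \<in> f" "x \<in> {t<..<s}"
  shows "connected_component (- (R \<union> \<gamma> ` {0..t} \<union> \<gamma> ` {s..1})) a (\<gamma> x)"
proof -
  have path: "path \<gamma>" using arc by (simp add: arc_imp_path)
  have mem_iff: "\<gamma> y \<in> \<gamma> ` S \<longleftrightarrow> y \<in> S" if "y \<in> {0..1}" "S \<subseteq> {0..1}" for y S
    using arc_image_mem_iff[OF arc that] .
  have f_disjoint: "f \<inter> (R \<union> path_image \<gamma>) = {}"
    using in_components_subset[OF component] by blast
  define t' where "t' = t / 2"
  define S where "S = \<gamma> ` {t'..t}"
  define T where "T = R \<union> \<gamma> ` {0..t'} \<union> \<gamma> ` {s..1}"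
  have arc_in_T: "\<gamma> y \<in> T \<longleftrightarrow> y \<le> t' \<or> s \<le> y" if "0 < y" "y < 1" for y
    using that assms arc_interior_notin_R[OF that] mem_iff[of y "{0..t'}"] mem_iff[of y "{s..1}"]
    by (auto simp: T_def t'_def)
  \<comment> \<open>Janiszewski: neither S nor T separates a from \<gamma> x, and S \<inter> T is a single point.\<close>
  have "connected_component (- (S \<union> T)) a (\<gamma> x)"
  proof (rule Janiszewski)
    show "compact S" unfolding S_def using path assms
      by (intro compact_continuous_image) (auto simp: path_def t'_def elim!: continuous_on_subset)
    show "closed T" unfolding T_def using path assms
      by (intro closed_Un closed_R compact_imp_closed compact_continuous_image)
         (auto simp: path_def t'_def elim!: continuous_on_subset)
    have "S \<inter> T = {\<gamma> t'}" using assms by (auto simp: S_def t'_def arc_in_T)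
    then show "connected (S \<inter> T)" by simp
    have "arc (subpath t' t \<gamma>)" using assms by (intro arc_subpath_arc[OF arc]) (auto simp: t'_def)
    then have "connected (- S)"
      using connected_arc_complement[of "subpath t' t \<gamma>"] assms
      by (simp add: path_image_subpath S_def t'_def)
    moreover have "a \<notin> S" using assms(5) f_disjoint assms by (auto simp: S_def path_image_def t'_def)
    moreover have "\<gamma> x \<notin> S" using assms mem_iff[of x "{t'..t}"] by (auto simp: S_def t'_def)
    ultimately show "connected_component (- S) a (\<gamma> x)"
      by (simp add: connected_iff_connected_component)
    show "connected_component (- T) a (\<gamma> x)"
    proof (rule component_connects_to_later_arc_points[OF path _ assms(2) _
          in_components_connected[OF component] assms(4) \<open>closed T\<close>])
      show "\<gamma> t \<notin> T" "\<gamma> ` {t<..<s} \<inter> T = {}"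
        using assms by (auto simp: arc_in_T t'_def)
      have "T \<subseteq> R \<union> path_image \<gamma>" using assms by (auto simp: T_def t'_def path_image_def)
      then show "f \<inter> T = {}" using f_disjoint by blast
    qed (use assms in auto)
  qed
  moreover have "\<gamma> ` {0..t'} \<union> \<gamma> ` {t'..t} = \<gamma> ` {0..t}"
    using assms(1) by (simp add: image_Un[symmetric] ivl_disj_un_two_touch t'_def)
  then have "S \<union> T = R \<union> \<gamma> ` {0..t} \<union> \<gamma> ` {s..1}" unfolding S_def T_def by blast
  ultimately show ?thesis by simp
qed

lemma closure_component_meets_later_arc_point:
  assumes "0 < t" "t < s" "s < 1" "\<gamma> t \<in> closure f"
  shows "\<exists>x\<in>{t<..s}. \<gamma> x \<in> closure f"
proof (rule ccontr)
  assume gap: "\<not> ?thesis"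
  define Y where "Y = R \<union> \<gamma> ` {0..t} \<union> \<gamma> ` {s..1}"
  define x where "x = (t + s) / 2"
  obtain a where a: "a \<in> f" using in_components_nonempty[OF component] by blast
  have "connected_component (- Y) a (\<gamma> x)"
    unfolding Y_def using assms a by (intro component_joins_open_arc_piece) (auto simp: x_def)
  then obtain C where C: "connected C" "C \<subseteq> - Y" "a \<in> C" "\<gamma> x \<in> C"
    unfolding connected_component_def by blast
  have "frontier f \<subseteq> Y"
  proof
    fix z assume z: "z \<in> frontier f"
    have "closed (R \<union> path_image \<gamma>)" using closed_R arc by (intro closed_Un closed_path_image arc_imp_path)
    then have "z \<in> R \<union> path_image \<gamma>"
      using frontier_of_components_closed_complement[OF _ component] z by blast
    then consider "z \<in> R" | y where "y \<in> {0..1}" "z = \<gamma> y"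
      unfolding path_image_def by blast
    then show "z \<in> Y"
    proof cases
      case (2 y)
      have "z \<in> closure f" using z by (simp add: frontier_def)
      then have "y \<le> t \<or> s < y" using gap 2 by force
      then show ?thesis using 2 by (auto simp: Y_def)
    qed (simp add: Y_def)
  qed
  then have "C \<subseteq> f"
    using connected_Int_frontier[OF C(1)] C(2,3) a by blast
  moreover have "\<gamma> x \<notin> f"
    using in_components_subset[OF component] assms by (auto simp: x_def path_image_def)
  ultimately show False using C(4) by blast
qed

lemma closure_component_contains_later_arc_points:
  assumes "0 < t" "t < s" "s < 1" "\<gamma> t \<in> closure f"
  shows "\<gamma> s \<in> closure f"
proof (rule ccontr)
  assume not_s: "\<gamma> s \<notin> closure f"
  define X where "X = {t..s} \<inter> \<gamma> -` closure f"
  have "path \<gamma>" using arc by (rule arc_imp_path)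
  then have "continuous_on {t..s} \<gamma>" using assms by (auto simp: path_def elim!: continuous_on_subset)
  then have "closed X" unfolding X_def by (rule continuous_closed_preimage) auto
  have "t \<in> X" using assms by (simp add: X_def)
  have "bdd_above X" by (rule bdd_aboveI[of _ s]) (simp add: X_def)
  define t0 where "t0 = Sup X"
  have "t0 \<in> X"
    unfolding t0_def using \<open>t \<in> X\<close> by (intro closed_contains_Sup \<open>bdd_above X\<close> \<open>closed X\<close>) blast
  then have "t \<le> t0" "t0 \<le> s" "\<gamma> t0 \<in> closure f" by (simp_all add: X_def)
  moreover have "t0 \<noteq> s" using \<open>\<gamma> t0 \<in> closure f\<close> not_s by blast
  ultimately obtain x where "x \<in> {t0<..s}" "\<gamma> x \<in> closure f"
    using closure_component_meets_later_arc_point[of t0 s] assms(1,3) by force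
  then have "x \<in> X" using \<open>t \<le> t0\<close> by (auto simp: X_def)
  then have "x \<le> t0" unfolding t0_def using \<open>bdd_above X\<close> by (rule cSup_upper)
  then show False using \<open>x \<in> {t0<..s}\<close> by simp
qed

end

lemma arc_subset_closure_component:
  fixes \<gamma> :: "real \<Rightarrow> complex"
  assumes arc: "arc \<gamma>" and "closed R" and R_meets_arc: "R \<inter> path_image \<gamma> \<subseteq> {\<gamma> 0, \<gamma> 1}"
    and component: "f \<in> components (- (R \<union> path_image \<gamma>))"
    and "0 < t" "t < 1" "\<gamma> t \<in> closure f"
  shows "path_image \<gamma> \<subseteq> closure f"
proof -
  have "\<gamma> s \<in> closure f" if "0 < s" "s < 1" for s
  proof (cases "t < s")
    case True
    then show ?thesis
      using closure_component_contains_later_arc_points[OF assms(1-4)] assms(5-7) that by blast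
  next
    case False
    have "reversepath \<gamma> (1 - s) \<in> closure f" if "s < t"
    proof (rule closure_component_contains_later_arc_points[where \<gamma> = "reversepath \<gamma>" and t = "1 - t"])
      have "reversepath \<gamma> 0 = \<gamma> 1" "reversepath \<gamma> 1 = \<gamma> 0" by (simp_all add: reversepath_def)
      then show "R \<inter> path_image (reversepath \<gamma>) \<subseteq> {reversepath \<gamma> 0, reversepath \<gamma> 1}"
        using R_meets_arc by (simp add: insert_commute)
      show "reversepath \<gamma> (1 - t) \<in> closure f" using assms by (simp add: reversepath_def)
      show "arc (reversepath \<gamma>)" using arc by (simp add: arc_reversepath)
      show "f \<in> components (- (R \<union> path_image (reversepath \<gamma>)))" using component by simp
    qed (use assms \<open>0 < s\<close> \<open>s < t\<close> in simp_all)
    then show ?thesis using False assms(7) by (cases "s = t") (simp_all add: reversepath_def)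
  qed
  then have "\<gamma> ` {0<..<1} \<subseteq> closure f" by auto
  then have "closure (\<gamma> ` {0<..<1}) \<subseteq> closure f" by (simp add: closure_minimal)
  moreover have "path_image \<gamma> \<subseteq> closure (\<gamma> ` {0<..<1})"
    using path_segment_subset_closure[of \<gamma> 0 1] arc by (simp add: arc_imp_path path_image_def)
  ultimately show ?thesis by blast
qed

lemma induces_connectedI:
  assumes "\<And>P Q. P \<union> Q = S \<Longrightarrow> P \<inter> Q = {} \<Longrightarrow> P \<noteq> {} \<Longrightarrow> Q \<noteq> {} \<Longrightarrow> \<exists>a\<in>P. \<exists>b\<in>Q. adj a b"
  shows "induces_connected adj S"
  unfolding induces_connected_def
proof (intro ballI)
  fix x y assume "x \<in> S" "y \<in> S"
  define R where "R = {(a, b). a \<in> S \<and> b \<in> S \<and> adj a b}"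
  define P where "P = {z \<in> S. (x, z) \<in> R\<^sup>*}"
  have "S - P = {}"
  proof (rule ccontr)
    assume "S - P \<noteq> {}"
    moreover have "x \<in> P" using \<open>x \<in> S\<close> by (simp add: P_def)
    ultimately obtain a b where "a \<in> P" "b \<in> S - P" "adj a b"
      using assms[of P "S - P"] by (auto simp: P_def)
    then have "(x, b) \<in> R\<^sup>*" by (auto simp: P_def R_def intro: rtrancl_into_rtrancl)
    then show False using \<open>b \<in> S - P\<close> by (simp add: P_def)
  qed
  then show "(x, y) \<in> R\<^sup>*" using \<open>y \<in> S\<close> by (auto simp: P_def)
qed

lemma dual_color_at_vertex:
  assumes "e \<in> E" "u \<in> e" "c \<in> \<sigma> u" "edge_on_face arcs e f"
  shows "c \<in> dual_color E arcs \<sigma> f"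
  using assms unfolding dual_color_def edge_color_def by blast

locale plane_embedding =
  fixes V :: "'v set" and E :: "'v set set" and pos :: "'v \<Rightarrow> complex"
    and arcs :: "'v set \<Rightarrow> real \<Rightarrow> complex"
  assumes plane_graph: "plane_graph V E pos arcs"
begin

abbreviation "drawn \<equiv> drawing V E pos arcs"
abbreviation "Faces \<equiv> faces V E pos arcs"

lemma finite_V: "finite V"
  using plane_graph by (simp add: plane_graph_def)

lemma edge_doubleton:
  assumes "e \<in> E"
  shows "\<exists>a b. e = {a, b} \<and> a \<noteq> b \<and> a \<in> V \<and> b \<in> V"
proof -
  have "E \<subseteq> {{u, v} | u v. u \<in> V \<and> v \<in> V \<and> u \<noteq> v}"
    using plane_graph by (simp add: plane_graph_def)
  then show ?thesis using assms by blast
qed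

lemma edge_subset_V: "e \<in> E \<Longrightarrow> e \<subseteq> V"
  using edge_doubleton by blast

lemma finite_E: "finite E"
  using finite_V edge_subset_V by (meson Pow_iff finite_Pow_iff finite_subset subsetI)

lemma inj_pos: "inj_on pos V"
  using plane_graph by (simp add: plane_graph_def)

lemma arc_edge: "e \<in> E \<Longrightarrow> arc (arcs e)"
  using plane_graph by (simp add: plane_graph_def)

lemma arc_ends: "e \<in> E \<Longrightarrow> {arcs e 0, arcs e 1} = pos ` e"
  using plane_graph by (simp add: plane_graph_def pathstart_def pathfinish_def)

lemma vertex_on_arc: "e \<in> E \<Longrightarrow> v \<in> V \<Longrightarrow> pos v \<in> path_image (arcs e) \<Longrightarrow> v \<in> e"
  using plane_graph by (simp add: plane_graph_def)

lemma arcs_inter: "e \<in> E \<Longrightarrow> e' \<in> E \<Longrightarrow> e \<noteq> e' \<Longrightarrow>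
    path_image (arcs e) \<inter> path_image (arcs e') \<subseteq> pos ` (e \<inter> e')"
  using plane_graph unfolding plane_graph_def by blast

lemma arcs_at_vertex_inter:
  assumes "e \<in> E" "e' \<in> E" "e \<noteq> e'" "u \<in> e" "u \<in> e'"
  shows "path_image (arcs e) \<inter> path_image (arcs e') \<subseteq> {pos u}"
proof -
  have "e \<inter> e' \<subseteq> {u}"
    using assms edge_doubleton[OF assms(1)] edge_doubleton[OF assms(2)] by auto
  then show ?thesis using arcs_inter[OF assms(1-3)] by blast
qed

lemma arc_interior_notin_vertices:
  assumes "e \<in> E" "0 < t" "t < 1"
  shows "arcs e t \<notin> pos ` V"
proof
  assume "arcs e t \<in> pos ` V"
  then obtain v where "v \<in> V" "arcs e t = pos v" by blast
  moreover have "arcs e t \<in> path_image (arcs e)" using assms by (auto simp: path_image_def)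
  ultimately have "v \<in> e" using vertex_on_arc[OF assms(1)] by auto
  then have "arcs e t \<in> arcs e ` {0, 1}" using arc_ends[OF assms(1)] \<open>arcs e t = pos v\<close> by auto
  then show False using arc_image_mem_iff[OF arc_edge[OF assms(1)], of t "{0, 1}"] assms by auto
qed

lemma closed_subdrawing:
  assumes "W \<subseteq> V" "F \<subseteq> E"
  shows "closed (pos ` W \<union> (\<Union>e\<in>F. path_image (arcs e)))"
proof (rule closed_Un)
  show "closed (pos ` W)" using assms finite_V by (meson finite_imageI finite_imp_closed finite_subset)
  show "closed (\<Union>e\<in>F. path_image (arcs e))"
  proof (rule closed_UN)
    show "finite F" using assms(2) finite_E by (rule finite_subset)
    show "\<forall>e\<in>F. closed (path_image (arcs e))"
      using assms(2) arc_edge by (blast intro: closed_path_image arc_imp_path)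
  qed
qed

lemma closed_drawn: "closed drawn"
  unfolding drawing_def by (rule closed_subdrawing) auto

definition drawn_except :: "'v set \<Rightarrow> complex set" where
  "drawn_except e = pos ` V \<union> (\<Union>e'\<in>E - {e}. path_image (arcs e'))"

lemma closed_drawn_except: "closed (drawn_except e)"
  unfolding drawn_except_def by (rule closed_subdrawing) auto

lemma arc_subset_drawn: "e \<in> E \<Longrightarrow> path_image (arcs e) \<subseteq> drawn"
  unfolding drawing_def by blast

lemma vertices_subset_drawn: "pos ` V \<subseteq> drawn"
  unfolding drawing_def by blast

lemma drawn_split: "e \<in> E \<Longrightarrow> drawn = drawn_except e \<union> path_image (arcs e)"
  unfolding drawn_except_def drawing_def by blast

lemma drawn_except_inter_arc:
  assumes "e \<in> E"
  shows "drawn_except e \<inter> path_image (arcs e) \<subseteq> {arcs e 0, arcs e 1}"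
proof
  fix z assume z: "z \<in> drawn_except e \<inter> path_image (arcs e)"
  then consider v where "v \<in> V" "z = pos v" | e' where "e' \<in> E" "e' \<noteq> e" "z \<in> path_image (arcs e')"
    unfolding drawn_except_def by blast
  then have "z \<in> pos ` e"
  proof cases
    case 1
    then show ?thesis using vertex_on_arc[OF assms] z by auto
  next
    case 2
    then show ?thesis using arcs_inter[OF assms 2(1)] z by blast
  qed
  then show "z \<in> {arcs e 0, arcs e 1}" using arc_ends[OF assms] by blast
qed

lemma open_face: "f \<in> Faces \<Longrightarrow> open f"
  unfolding faces_def by (rule open_components[OF open_Compl[OF closed_drawn]])

lemma face_disjoint_drawn: "f \<in> Faces \<Longrightarrow> f \<inter> drawn = {}"
  using in_components_subset by (fastforce simp: faces_def)

lemma frontier_face: "f \<in> Faces \<Longrightarrow> frontier f \<subseteq> drawn"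
  using closed_drawn frontier_of_components_closed_complement by (auto simp: faces_def)

lemma face_of_point: "z \<notin> drawn \<Longrightarrow> connected_component_set (- drawn) z \<in> Faces"
  by (simp add: faces_def componentsI)

lemma edge_on_faceI:
  assumes "e \<in> E" "f \<in> Faces" "0 < t" "t < 1" "arcs e t \<in> closure f"
  shows "edge_on_face arcs e f"
proof -
  have "path_image (arcs e) \<subseteq> closure f"
  proof (rule arc_subset_closure_component[OF arc_edge[OF assms(1)] closed_drawn_except
        drawn_except_inter_arc[OF assms(1)] _ assms(3-5)])
    show "f \<in> components (- (drawn_except e \<union> path_image (arcs e)))"
      using assms(2) drawn_split[OF assms(1)] by (simp add: faces_def)
  qed
  moreover have "path_image (arcs e) \<inter> interior f = {}"
    using face_disjoint_drawn[OF assms(2)] open_face[OF assms(2)] drawn_split[OF assms(1)]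
    by (auto simp: interior_open)
  ultimately show ?thesis by (auto simp: edge_on_face_def frontier_def)
qed

lemma drawn_near_arc_point:
  assumes "e \<in> E" "0 < t" "t < 1"
  obtains \<rho> where "\<rho> > 0" "ball (arcs e t) \<rho> \<inter> drawn \<subseteq> arcs e ` {0<..<1}"
proof -
  have "arcs e t \<notin> drawn_except e"
    using drawn_except_inter_arc[OF assms(1)] assms(2,3)
      arc_image_mem_iff[OF arc_edge[OF assms(1)], of t "{0, 1}"]
    by (auto simp: path_image_def)
  then obtain \<rho> where "\<rho> > 0" and ball: "ball (arcs e t) \<rho> \<inter> drawn_except e = {}"
    using closed_drawn_except open_contains_ball[of "- drawn_except e"] by blast
  have "{arcs e 0, arcs e 1} \<subseteq> pos ` V"
    using arc_ends[OF assms(1)] edge_subset_V[OF assms(1)] by (simp add: image_mono)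
  then have ends: "arcs e 0 \<in> drawn_except e" "arcs e 1 \<in> drawn_except e"
    by (auto simp: drawn_except_def)
  have "ball (arcs e t) \<rho> \<inter> drawn \<subseteq> arcs e ` ({0..1} - {0, 1})"
    using ball ends drawn_split[OF assms(1)] by (auto simp: path_image_def)
  also have "{0..1} - {0, 1} = {0<..<(1::real)}" by auto
  finally show ?thesis using that \<open>\<rho> > 0\<close> by blast
qed

lemma edge_on_faces_near_arc_point:
  assumes "e \<in> E" "0 < t" "t < 1"
  obtains \<rho> where "\<rho> > 0" "ball (arcs e t) \<rho> \<inter> drawn \<subseteq> arcs e ` {0<..<1}"
    "\<And>z. z \<in> ball (arcs e t) \<rho> - drawn \<Longrightarrow> edge_on_face arcs e (connected_component_set (- drawn) z)"
proof -
  obtain \<rho> where "\<rho> > 0" and near: "ball (arcs e t) \<rho> \<inter> drawn \<subseteq> arcs e ` {0<..<1}"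
    using drawn_near_arc_point[OF assms] by blast
  have "edge_on_face arcs e g" if z: "z \<in> ball (arcs e t) \<rho> - drawn"
    and g: "g = connected_component_set (- drawn) z" for z g
  proof -
    have face: "g \<in> Faces" using face_of_point z g by blast
    have "arcs e t \<in> drawn" using assms drawn_split[OF assms(1)] by (auto simp: path_image_def)
    then have "ball (arcs e t) \<rho> - g \<noteq> {}"
      using \<open>\<rho> > 0\<close> face_disjoint_drawn[OF face] by (metis Diff_iff centre_in_ball disjoint_iff empty_iff)
    moreover have "ball (arcs e t) \<rho> \<inter> g \<noteq> {}" using z g by auto
    ultimately obtain w where w: "w \<in> ball (arcs e t) \<rho>" "w \<in> frontier g"
      using connected_Int_frontier[OF connected_ball] by blast
    then obtain s where "s \<in> {0<..<1}" "w = arcs e s"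
      using near frontier_face[OF face] by blast
    then show ?thesis
      using edge_on_faceI[OF assms(1) face] w(2) by (auto simp: frontier_def)
  qed
  then show ?thesis using that \<open>\<rho> > 0\<close> near by blast
qed

lemma edge_on_some_face:
  assumes "e \<in> E"
  shows "\<exists>f\<in>Faces. edge_on_face arcs e f"
proof -
  have t: "0 < (1/2::real)" "(1/2::real) < 1" by auto
  obtain \<rho> where "\<rho> > 0" and near: "ball (arcs e (1/2)) \<rho> \<inter> drawn \<subseteq> arcs e ` {0<..<1}"
    and on_face: "\<And>z. z \<in> ball (arcs e (1/2)) \<rho> - drawn \<Longrightarrow>
      edge_on_face arcs e (connected_component_set (- drawn) z)"
    using edge_on_faces_near_arc_point[OF assms t] by blast
  have "\<not> ball (arcs e (1/2)) \<rho> \<subseteq> path_image (arcs e)"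
  proof
    assume "ball (arcs e (1/2)) \<rho> \<subseteq> path_image (arcs e)"
    then have "ball (arcs e (1/2)) \<rho> \<subseteq> interior (path_image (arcs e))"
      by (rule interior_maximal) simp
    then show False
      using interior_arc_image_empty[OF arc_edge[OF assms]] \<open>\<rho> > 0\<close> by auto
  qed
  then obtain z where "z \<in> ball (arcs e (1/2)) \<rho>" "z \<notin> path_image (arcs e)" by blast
  moreover have "arcs e ` {0<..<1} \<subseteq> path_image (arcs e)" by (auto simp: path_image_def)
  ultimately have "z \<in> ball (arcs e (1/2)) \<rho> - drawn" using near by blast
  then show ?thesis using on_face face_of_point by blast
qed

lemma arc_point_off_vertices:
  assumes "e \<in> E" "x \<in> path_image (arcs e)" "x \<notin> pos ` V"
  shows "x \<in> arcs e ` {0<..<1}"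
proof -
  have "{arcs e 0, arcs e 1} \<subseteq> pos ` V"
    using arc_ends[OF assms(1)] edge_subset_V[OF assms(1)] by (simp add: image_mono)
  moreover obtain t where "t \<in> {0..1}" "x = arcs e t"
    using assms(2) by (auto simp: path_image_def)
  ultimately have "t \<in> {0<..<1}" "x = arcs e t" using assms(3) by (auto simp: less_le)
  then show ?thesis by blast
qed

lemma drawn_near_vertex:
  assumes "u \<in> V"
  shows "\<exists>r>0. ball (pos u) r \<inter> drawn - {pos u} \<subseteq> (\<Union>e\<in>{e\<in>E. u \<in> e}. arcs e ` {0<..<1})"
proof -
  define Far where "Far = pos ` (V - {u}) \<union> (\<Union>e\<in>{e\<in>E. u \<notin> e}. path_image (arcs e))"
  have "pos u \<notin> pos ` (V - {u})"
    using inj_on_image_mem_iff[OF inj_pos assms, of "V - {u}"] by blast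
  moreover have "pos u \<notin> path_image (arcs e)" if "e \<in> E" "u \<notin> e" for e
    using vertex_on_arc[OF that(1) assms] that(2) by blast
  ultimately have "pos u \<notin> Far" unfolding Far_def by blast
  moreover have "closed Far" unfolding Far_def by (rule closed_subdrawing) auto
  ultimately obtain r where "r > 0" and ball: "ball (pos u) r \<subseteq> - Far"
    using open_contains_ball[of "- Far"] by (metis ComplI open_Compl)
  have "z \<in> (\<Union>e\<in>{e\<in>E. u \<in> e}. arcs e ` {0<..<1})" if z: "z \<in> ball (pos u) r \<inter> drawn - {pos u}" for z
  proof -
    have "z \<notin> Far" using z ball by blast
    then have "z \<notin> pos ` V" using z by (auto simp: Far_def)
    then obtain e where e: "e \<in> E" "z \<in> path_image (arcs e)" using z by (auto simp: drawing_def)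
    then have "u \<in> e" using \<open>z \<notin> Far\<close> by (auto simp: Far_def)
    moreover have "z \<in> arcs e ` {0<..<1}" using arc_point_off_vertices e \<open>z \<notin> pos ` V\<close> by blast
    ultimately show ?thesis using e(1) by blast
  qed
  then have "ball (pos u) r \<inter> drawn - {pos u} \<subseteq> (\<Union>e\<in>{e\<in>E. u \<in> e}. arcs e ` {0<..<1})"
    by (rule subsetI)
  then show ?thesis using \<open>r > 0\<close> by blast
qed

definition faces_at :: "'v \<Rightarrow> complex set set" where
  "faces_at u = {f \<in> Faces. \<exists>e\<in>E. u \<in> e \<and> edge_on_face arcs e f}"

definition adjacent_at :: "'v \<Rightarrow> complex set \<Rightarrow> complex set \<Rightarrow> bool" where
  "adjacent_at u f g \<longleftrightarrow> (\<exists>e\<in>E. u \<in> e \<and> edge_on_face arcs e f \<and> edge_on_face arcs e g)"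

definition fan :: "'v \<Rightarrow> complex set set \<Rightarrow> complex set" where
  "fan u P = \<Union>P \<union> (\<Union>e\<in>{e\<in>E. u \<in> e \<and> (\<exists>f\<in>P. edge_on_face arcs e f)}. path_image (arcs e))"

lemma fan_Un: "fan u (P \<union> Q) = fan u P \<union> fan u Q"
  by (auto simp: fan_def)

lemma fan_contains_arc_point_nbhd:
  assumes closed_P: "\<And>f g. f \<in> P \<Longrightarrow> g \<in> Faces \<Longrightarrow> adjacent_at u f g \<Longrightarrow> g \<in> P"
    and "e \<in> E" "u \<in> e" "f \<in> P" "edge_on_face arcs e f" "0 < t" "t < 1"
  shows "\<exists>\<rho>>0. ball (arcs e t) \<rho> \<subseteq> fan u P - pos ` V"
proof -
  obtain \<rho> where "\<rho> > 0" and near: "ball (arcs e t) \<rho> \<inter> drawn \<subseteq> arcs e ` {0<..<1}"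
    and on_face: "\<And>z. z \<in> ball (arcs e t) \<rho> - drawn \<Longrightarrow>
      edge_on_face arcs e (connected_component_set (- drawn) z)"
    using edge_on_faces_near_arc_point[OF assms(2,6,7)] by blast
  have arc_in_fan: "path_image (arcs e) \<subseteq> fan u P"
    unfolding fan_def using assms(2-5) by blast
  have "z \<in> fan u P - pos ` V" if z: "z \<in> ball (arcs e t) \<rho>" for z
  proof (cases "z \<in> drawn")
    case True
    then obtain s where "s \<in> {0<..<1}" "z = arcs e s" using near z by blast
    then show ?thesis
      using arc_in_fan arc_interior_notin_vertices[OF assms(2)] by (auto simp: path_image_def)
  next
    case False
    define g where "g = connected_component_set (- drawn) z"
    have "g \<in> Faces" "z \<in> g" using False face_of_point by (auto simp: g_def)
    moreover have "adjacent_at u f g"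
      unfolding adjacent_at_def using assms(2-5) on_face[of z] z False g_def by blast
    ultimately have "z \<in> fan u P" using closed_P assms(4) unfolding fan_def by blast
    then show ?thesis using False vertices_subset_drawn by blast
  qed
  then show ?thesis using \<open>\<rho> > 0\<close> by blast
qed

lemma open_fan_minus_vertices:
  assumes "P \<subseteq> Faces" and closed_P: "\<And>f g. f \<in> P \<Longrightarrow> g \<in> Faces \<Longrightarrow> adjacent_at u f g \<Longrightarrow> g \<in> P"
  shows "open (fan u P - pos ` V)"
  unfolding open_contains_ball
proof
  fix x assume x: "x \<in> fan u P - pos ` V"
  then consider f where "f \<in> P" "x \<in> f"
    | e f where "e \<in> E" "u \<in> e" "f \<in> P" "edge_on_face arcs e f" "x \<in> path_image (arcs e)"
    unfolding fan_def by blast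
  then show "\<exists>\<rho>>0. ball x \<rho> \<subseteq> fan u P - pos ` V"
  proof cases
    case 1
    then have "f \<in> Faces" using assms(1) by blast
    then obtain \<rho> where "\<rho> > 0" "ball x \<rho> \<subseteq> f"
      using open_face 1(2) open_contains_ball by blast
    moreover have "f \<inter> pos ` V = {}"
      using face_disjoint_drawn[OF \<open>f \<in> Faces\<close>] vertices_subset_drawn by blast
    moreover have "f \<subseteq> fan u P" using 1(1) by (auto simp: fan_def)
    ultimately show ?thesis by blast
  next
    case 2
    then obtain t where "t \<in> {0<..<1}" "x = arcs e t"
      using arc_point_off_vertices x by blast
    then show ?thesis
      using fan_contains_arc_point_nbhd[OF closed_P 2(1-4)] by simp
  qed
qed

lemma fan_disjoint:
  assumes "P \<subseteq> Faces" "Q \<subseteq> Faces" "P \<inter> Q = {}"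
    and no_adj: "\<And>f g. f \<in> P \<Longrightarrow> g \<in> Q \<Longrightarrow> \<not> adjacent_at u f g"
  shows "fan u P \<inter> fan u Q \<subseteq> {pos u}"
proof -
  define A where "A P = (\<Union>e\<in>{e\<in>E. u \<in> e \<and> (\<exists>f\<in>P. edge_on_face arcs e f)}. path_image (arcs e))"
    for P :: "complex set set"
  have "f \<inter> g = {}" if "f \<in> P" "g \<in> Q" for f g
  proof -
    have "f \<noteq> g" using that assms(3) by blast
    moreover have "f \<in> components (- drawn)" "g \<in> components (- drawn)"
      using that assms(1,2) by (auto simp: faces_def)
    ultimately show ?thesis using components_nonoverlap by blast
  qed
  then have "\<Union>P \<inter> \<Union>Q = {}" by blast
  have "f \<inter> drawn = {}" if "f \<in> P \<union> Q" for f
    using that assms(1,2) face_disjoint_drawn by blast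
  then have "\<Union>P \<inter> drawn = {}" "\<Union>Q \<inter> drawn = {}" by blast+
  have "A P \<subseteq> drawn" "A Q \<subseteq> drawn" unfolding A_def drawing_def by blast+
  have "A P \<inter> A Q \<subseteq> {pos u}"
  proof
    fix z assume "z \<in> A P \<inter> A Q"
    then obtain e e' f g where "e \<in> E" "u \<in> e" "f \<in> P" "edge_on_face arcs e f"
      "e' \<in> E" "u \<in> e'" "g \<in> Q" "edge_on_face arcs e' g"
      "z \<in> path_image (arcs e)" "z \<in> path_image (arcs e')"
      unfolding A_def by blast
    moreover have "e \<noteq> e'"
    proof
      assume "e = e'"
      then have "adjacent_at u f g" unfolding adjacent_at_def using calculation by blast
      then show False using no_adj calculation by blast
    qed
    ultimately show "z \<in> {pos u}" using arcs_at_vertex_inter[of e e' u] by blast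
  qed
  have "fan u P = \<Union>P \<union> A P" "fan u Q = \<Union>Q \<union> A Q" by (simp_all add: fan_def A_def)
  then show ?thesis
    using \<open>\<Union>P \<inter> \<Union>Q = {}\<close> \<open>\<Union>P \<inter> drawn = {}\<close> \<open>\<Union>Q \<inter> drawn = {}\<close>
      \<open>A P \<subseteq> drawn\<close> \<open>A Q \<subseteq> drawn\<close> \<open>A P \<inter> A Q \<subseteq> {pos u}\<close>
    by auto
qed

lemma face_near_vertex_at:
  assumes "r > 0" and near: "ball (pos u) r \<inter> drawn - {pos u} \<subseteq> (\<Union>e\<in>{e\<in>E. u \<in> e}. arcs e ` {0<..<1})"
    and "e \<in> E" "u \<in> e" "g \<in> Faces" "z \<in> g" "z \<in> ball (pos u) r"
  shows "g \<in> faces_at u"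
proof -
  define B where "B = ball (pos u) r - {pos u}"
  have "connected B" unfolding B_def by (rule connected_punctured_ball) simp
  moreover have "B \<inter> g \<noteq> {}"
    using assms(5-7) face_disjoint_drawn vertices_subset_drawn \<open>u \<in> e\<close> edge_subset_V[OF \<open>e \<in> E\<close>]
    unfolding B_def by blast
  moreover have "B - g \<noteq> {}"
  proof -
    have "pos u \<in> {arcs e 0, arcs e 1}" using arc_ends[OF assms(3)] assms(4) by blast
    then have "B \<inter> arcs e ` {0<..<1} \<noteq> {}"
      unfolding B_def by (rule arc_approaches_endpoint[OF arc_edge[OF assms(3)] _ \<open>r > 0\<close>])
    then obtain s where "arcs e s \<in> B" "s \<in> {0<..<1}" by blast
    moreover have "arcs e s \<in> drawn"
      using arc_subset_drawn[OF assms(3)] calculation(2) by (auto simp: path_image_def)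
    ultimately show ?thesis using face_disjoint_drawn[OF assms(5)] by blast
  qed
  ultimately obtain w where w: "w \<in> B" "w \<in> frontier g" using connected_Int_frontier by blast
  then have "w \<in> ball (pos u) r \<inter> drawn - {pos u}" using frontier_face[OF assms(5)] by (auto simp: B_def)
  then obtain e' s where e': "e' \<in> E" "u \<in> e'" "s \<in> {0<..<1}" "w = arcs e' s" using near by blast
  then have "edge_on_face arcs e' g"
    using edge_on_faceI[OF e'(1) assms(5), of s] w(2) by (simp add: frontier_def)
  then show ?thesis unfolding faces_at_def using assms(5) e'(1,2) by blast
qed

lemma punctured_ball_in_fan:
  assumes "u \<in> V" "e \<in> E" "u \<in> e"
  obtains r where "r > 0" "ball (pos u) r - {pos u} \<subseteq> fan u (faces_at u)"
    "(ball (pos u) r - {pos u}) \<inter> pos ` V = {}"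
proof -
  obtain r where "r > 0"
    and near: "ball (pos u) r \<inter> drawn - {pos u} \<subseteq> (\<Union>e\<in>{e\<in>E. u \<in> e}. arcs e ` {0<..<1})"
    using drawn_near_vertex[OF assms(1)] by blast
  define B where "B = ball (pos u) r - {pos u}"
  have arc_point: "\<exists>e s. e \<in> E \<and> u \<in> e \<and> 0 < s \<and> s < 1 \<and> z = arcs e s" if z: "z \<in> B \<inter> drawn" for z
  proof -
    have "z \<in> ball (pos u) r \<inter> drawn - {pos u}" using z by (simp add: B_def)
    then obtain e s where "e \<in> E" "u \<in> e" "s \<in> {0<..<1}" "z = arcs e s" using near by blast
    then show ?thesis by auto
  qed
  have "z \<in> fan u (faces_at u)" if z: "z \<in> B" for z
  proof (cases "z \<in> drawn")
    case True
    then obtain e s where e: "e \<in> E" "u \<in> e" "0 < s" "s < 1" "z = arcs e s"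
      using arc_point z by blast
    obtain f where "f \<in> Faces" "edge_on_face arcs e f" using edge_on_some_face[OF e(1)] by blast
    then have "f \<in> faces_at u" unfolding faces_at_def using e(1,2) by blast
    moreover have "z \<in> path_image (arcs e)" using e(3-5) by (simp add: path_image_def)
    ultimately show ?thesis unfolding fan_def using e(1,2) \<open>edge_on_face arcs e f\<close> by blast
  next
    case False
    define g where "g = connected_component_set (- drawn) z"
    have g: "g \<in> Faces" "z \<in> g" using face_of_point[OF False] False by (simp_all add: g_def)
    then have "g \<in> faces_at u"
      using face_near_vertex_at[OF \<open>r > 0\<close> near assms(2,3)] z by (simp add: B_def)
    then show ?thesis unfolding fan_def using g(2) by blast
  qed
  then have "B \<subseteq> fan u (faces_at u)" by (rule subsetI)
  moreover have "B \<inter> pos ` V = {}"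
  proof -
    have "z \<notin> pos ` V" if z: "z \<in> B \<inter> drawn" for z
    proof -
      obtain e s where "e \<in> E" "0 < s" "s < 1" "z = arcs e s" using arc_point[OF z] by blast
      then show ?thesis using arc_interior_notin_vertices by simp
    qed
    then show ?thesis using vertices_subset_drawn by blast
  qed
  ultimately show ?thesis unfolding B_def by (rule that[OF \<open>r > 0\<close>])
qed

lemma punctured_ball_meets_fan:
  assumes "X \<noteq> {}" "X \<subseteq> faces_at u" "r > 0"
  shows "(fan u X - pos ` V) \<inter> (ball (pos u) r - {pos u}) \<noteq> {}"
proof -
  obtain f where "f \<in> X" using assms(1) by blast
  then obtain e where "e \<in> E" "u \<in> e" "edge_on_face arcs e f"
    using assms(2) unfolding faces_at_def by blast
  have "pos u \<in> {arcs e 0, arcs e 1}" using arc_ends[OF \<open>e \<in> E\<close>] \<open>u \<in> e\<close> by blast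
  then have "(ball (pos u) r - {pos u}) \<inter> arcs e ` {0<..<1} \<noteq> {}"
    by (rule arc_approaches_endpoint[OF arc_edge[OF \<open>e \<in> E\<close>] _ \<open>r > 0\<close>])
  then obtain s where s: "s \<in> {0<..<1}" "arcs e s \<in> ball (pos u) r - {pos u}" by blast
  then have "arcs e s \<in> path_image (arcs e)" by (auto simp: path_image_def)
  then have "arcs e s \<in> fan u X"
    unfolding fan_def using \<open>f \<in> X\<close> \<open>e \<in> E\<close> \<open>u \<in> e\<close> \<open>edge_on_face arcs e f\<close> by blast
  moreover have "arcs e s \<notin> pos ` V" using arc_interior_notin_vertices \<open>e \<in> E\<close> s(1) by simp
  ultimately show ?thesis using s(2) by blast
qed

lemma faces_at_connected:
  assumes "u \<in> V"
  shows "induces_connected (adjacent_at u) (faces_at u)"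
proof (rule induces_connectedI, rule ccontr)
  fix P Q
  assume split: "P \<union> Q = faces_at u" "P \<inter> Q = {}" "P \<noteq> {}" "Q \<noteq> {}"
    and no_adj: "\<not> (\<exists>f\<in>P. \<exists>g\<in>Q. adjacent_at u f g)"
  have faces: "P \<subseteq> Faces" "Q \<subseteq> Faces" using split(1) by (auto simp: faces_at_def)
  have at_u: "g \<in> faces_at u" if "g \<in> Faces" "adjacent_at u f g" for f g
    using that by (auto simp: faces_at_def adjacent_at_def)
  have closed_P: "g \<in> P" if "f \<in> P" "g \<in> Faces" "adjacent_at u f g" for f g
    using at_u[OF that(2,3)] split(1) no_adj that(1,3) by blast
  have closed_Q: "g \<in> Q" if "f \<in> Q" "g \<in> Faces" "adjacent_at u f g" for f g
  proof -
    have "adjacent_at u g f" using that(3) unfolding adjacent_at_def by blast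
    then show ?thesis using at_u[OF that(2,3)] split(1) no_adj that(1) by blast
  qed
  obtain f where "f \<in> P" using split(3) by blast
  then have "f \<in> faces_at u" using split(1) by blast
  then obtain e where "e \<in> E" "u \<in> e" unfolding faces_at_def by blast
  then obtain r where "r > 0" and in_fan: "ball (pos u) r - {pos u} \<subseteq> fan u (faces_at u)"
    and no_vertex: "(ball (pos u) r - {pos u}) \<inter> pos ` V = {}"
    by (rule punctured_ball_in_fan[OF assms])
  define B where "B = ball (pos u) r - {pos u}"
  have "fan u P \<inter> fan u Q \<subseteq> {pos u}"
    by (rule fan_disjoint[OF faces split(2)]) (use no_adj in blast)
  have fan_split: "fan u (faces_at u) = fan u P \<union> fan u Q"
    by (simp add: split(1)[symmetric] fan_Un)
  have "connected B" unfolding B_def by (rule connected_punctured_ball) simp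
  moreover have "open (fan u P - pos ` V)" using faces(1) closed_P by (rule open_fan_minus_vertices)
  moreover have "open (fan u Q - pos ` V)" using faces(2) closed_Q by (rule open_fan_minus_vertices)
  moreover have "(fan u P - pos ` V) \<inter> (fan u Q - pos ` V) \<inter> B = {}"
    using \<open>fan u P \<inter> fan u Q \<subseteq> {pos u}\<close> unfolding B_def by blast
  moreover have "B \<subseteq> (fan u P - pos ` V) \<union> (fan u Q - pos ` V)"
    using in_fan[unfolded fan_split] no_vertex unfolding B_def by blast
  ultimately have "(fan u P - pos ` V) \<inter> B = {} \<or> (fan u Q - pos ` V) \<inter> B = {}"
    by (rule connectedD)
  moreover have "P \<subseteq> faces_at u" "Q \<subseteq> faces_at u" using split(1) by blast+
  ultimately show False
    using punctured_ball_meets_fan[OF _ _ \<open>r > 0\<close>] split(3,4) unfolding B_def by metis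
qed

definition colored_faces :: "('v \<Rightarrow> nat set) \<Rightarrow> nat \<Rightarrow> complex set set" where
  "colored_faces \<sigma> c = {f \<in> Faces. c \<in> dual_color E arcs \<sigma> f}"

lemma colored_face_at_colored_vertex:
  assumes "f \<in> colored_faces \<sigma> c"
  obtains u where "u \<in> V" "c \<in> \<sigma> u" "f \<in> faces_at u"
proof -
  obtain e u where "e \<in> E" "edge_on_face arcs e f" "u \<in> e" "c \<in> \<sigma> u"
    using assms unfolding colored_faces_def dual_color_def edge_color_def by blast
  moreover have "f \<in> Faces" using assms by (simp add: colored_faces_def)
  ultimately show ?thesis using that edge_subset_V unfolding faces_at_def by blast
qed

lemma faces_at_colored_vertex_linked:
  assumes "u \<in> V" "c \<in> \<sigma> u" "f \<in> faces_at u" "g \<in> faces_at u"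
  shows "(f, g) \<in> {(a, b). a \<in> colored_faces \<sigma> c \<and> b \<in> colored_faces \<sigma> c \<and> dual_adj E arcs a b}\<^sup>*"
proof -
  have "(f, g) \<in> {(a, b). a \<in> faces_at u \<and> b \<in> faces_at u \<and> adjacent_at u a b}\<^sup>*"
    using faces_at_connected[OF assms(1)] assms(3,4) unfolding induces_connected_def by blast
  moreover have "faces_at u \<subseteq> colored_faces \<sigma> c"
    using dual_color_at_vertex[where \<sigma> = \<sigma>] assms(2) by (auto simp: faces_at_def colored_faces_def)
  moreover have "adjacent_at u a b \<Longrightarrow> dual_adj E arcs a b" for a b
    by (auto simp: adjacent_at_def dual_adj_def)
  ultimately show ?thesis by (elim rtrancl_mono[THEN subsetD, rotated]) blast
qed

lemma colored_faces_connected: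
  assumes "induces_connected (\<lambda>u v. {u, v} \<in> E) {v \<in> V. c \<in> \<sigma> v}"
  shows "induces_connected (dual_adj E arcs) (colored_faces \<sigma> c)"
  unfolding induces_connected_def
proof (intro ballI)
  define R where "R = {(a, b). a \<in> colored_faces \<sigma> c \<and> b \<in> colored_faces \<sigma> c \<and> dual_adj E arcs a b}"
  fix x y assume "x \<in> colored_faces \<sigma> c" "y \<in> colored_faces \<sigma> c"
  then obtain u1 u2 where u1: "u1 \<in> V" "c \<in> \<sigma> u1" "x \<in> faces_at u1"
    and u2: "u2 \<in> V" "c \<in> \<sigma> u2" "y \<in> faces_at u2"
    by (metis colored_face_at_colored_vertex)
  have "(u1, u2) \<in> {(a, b). a \<in> {v \<in> V. c \<in> \<sigma> v} \<and> b \<in> {v \<in> V. c \<in> \<sigma> v} \<and> {a, b} \<in> E}\<^sup>*"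
    using assms u1 u2 unfolding induces_connected_def by blast
  then have "\<forall>g\<in>faces_at u2. (x, g) \<in> R\<^sup>*"
  proof (induction rule: rtrancl_induct)
    case base
    then show ?case using faces_at_colored_vertex_linked[where \<sigma> = \<sigma> and c = c, OF u1] by (simp add: R_def)
  next
    case (step w w')
    then have w: "w \<in> V" "c \<in> \<sigma> w" "w' \<in> V" "c \<in> \<sigma> w'" "{w, w'} \<in> E" by auto
    obtain g0 where "g0 \<in> Faces" "edge_on_face arcs {w, w'} g0"
      using edge_on_some_face[OF w(5)] by blast
    then have "g0 \<in> faces_at w" "g0 \<in> faces_at w'" using w(5) by (auto simp: faces_at_def)
    then have "(x, g0) \<in> R\<^sup>*" using step.IH by blast
    moreover have "(g0, g) \<in> R\<^sup>*" if "g \<in> faces_at w'" for g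
      using faces_at_colored_vertex_linked[where \<sigma> = \<sigma> and c = c, OF w(3,4) \<open>g0 \<in> faces_at w'\<close> that] by (simp add: R_def)
    ultimately show ?case by (meson rtrancl_trans)
  qed
  then show "(x, y) \<in> R\<^sup>*" using u2(3) by blast
qed

end

theorem lemma3p3:
  fixes V :: "'v set" and E :: "'v set set" and pos :: "'v \<Rightarrow> complex"
    and arcs :: "'v set \<Rightarrow> real \<Rightarrow> complex" and m :: nat and \<sigma> :: "'v \<Rightarrow> nat set"
  assumes "plane_graph V E pos arcs"
    and "\<forall>v\<in>V. \<sigma> v \<subseteq> {1..m}"
    and "color_connected V E m \<sigma>"
  shows "dual_color_connected V E pos arcs m \<sigma>"
proof -
  interpret plane_embedding V E pos arcs by (rule plane_embedding.intro[OF assms(1)])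
  show ?thesis
    using colored_faces_connected assms(3)
    unfolding dual_color_connected_def color_connected_def colored_faces_def by blast
qed

end
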